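(* Let $n\ge2$ be an integer and $\alpha=1-\frac1n$. There is a constant $C_n>0$ depending only on $n$ such that for every real $\beta\le0$ and every $y\le-1$, $$C_n^{-1}\frac{e^y(-y)^{\frac{1-2\alpha}{4}}}{\Gamma(\alpha-\beta)}\int_{1/\sqrt{-y}}^\infty e^{G(u)}\,du\le\mathcal{M}(\beta,\alpha,y)\le C_n\frac{e^y(-y)^{\frac{1-2\alpha}{4}}}{\Gamma(\alpha-\beta)}\int_0^\infty e^{G(u)}\,du,$$ where $G(u)=-u^2+2\sqrt{-y}\,u+(\alpha-2\beta-\tfrac12)\log u$.
   Context: $(x)_k=\prod_{m=1}^k(x+m-1)$, $(x)_0=1$, and $\mathcal{M}(\beta,\alpha,y)=\sum_{k\ge0}\frac{(\beta)_k}{(\alpha)_k}\frac{y^k}{k!}$ (Kummer's function). *)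

theory Defs
  imports "HOL-Analysis.Analysis"
begin

definition kummerM :: "real \<Rightarrow> real \<Rightarrow> real \<Rightarrow> real" where
  "kummerM b a y = (\<Sum>k. pochhammer b k / pochhammer a k * y ^ k / fact k)"

definition kummerG :: "real \<Rightarrow> real \<Rightarrow> real \<Rightarrow> real \<Rightarrow> real" where
  "kummerG a b y u = - (u ^ 2) + 2 * sqrt (- y) * u + (a - 2 * b - 1 / 2) * ln u"

end

theory Submission
  imports Defs "HOL-Computational_Algebra.Formal_Power_Series" "HOL-Real_Asymp.Real_Asymp"
begin

text \<open>
  By Kummer's transformation M(\<beta>, \<alpha>, y) = e^y M(\<alpha> - \<beta>, \<alpha>, -y), so with a = \<alpha> - \<beta> > 0
  and x = -y it suffices to estimate M(a, \<alpha>, x). Integrating termwise, Gamma(a) M(a, \<alpha>, x) is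
  the integral of t^(a-1) e^(-t) 0F1(\<alpha>; x t) over t > 0.

  For 1/2 \<le> \<alpha> < 3/2 the function 0F1(\<alpha>; s) is comparable to s^((1 - 2\<alpha>)/4) e^(2 sqrt s),
  from above for s > 0 and from below for s \<ge> 1. For \<alpha> = 1/2 it is cosh (2 sqrt s); for
  \<alpha> > 1/2 the estimates come from writing B(1/2, \<alpha> - 1/2) 0F1(\<alpha>; s) as the integral of
  cosh (2 sqrt (s v)) v^(-1/2) (1 - v)^(\<alpha> - 3/2) over 0 < v < 1.

  Substituting t = u^2 turns the resulting Gamma-type integrals into 2 x^((1 - 2\<alpha>)/4) times
  integrals of e^G(u). Because the lower bound for 0F1 needs x t \<ge> 1, the lower estimate only
  involves u > 1/sqrt x.
\<close>

section \<open>Kummer's transformation\<close>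

lemma summable_kummer_series:
  fixes a b y :: real
  assumes "a > 0"
  shows "summable (\<lambda>k. norm (pochhammer b k / pochhammer a k * y ^ k / fact k))"
proof -
  define r where "r k = \<bar>b + real k\<bar> * \<bar>y\<bar> / ((a + real k) * (real k + 1))" for k :: nat
  have "r \<longlonglongrightarrow> 0"
    unfolding r_def by real_asymp
  then obtain N where N: "\<And>k. k \<ge> N \<Longrightarrow> r k < 1/2"
    using order_tendstoD(2)[of r 0 sequentially "1/2"] by (auto simp: eventually_sequentially)
  show ?thesis
  proof (rule summable_ratio_test[of "1/2" N])
    fix k assume "k \<ge> N"
    have "pochhammer a k > 0" "a + real k > 0"
      using assms by (auto intro: pochhammer_pos)
    then have ratio: "norm (norm (pochhammer b (Suc k) / pochhammer a (Suc k) * y ^ Suc k / fact (Suc k)))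
        = r k * norm (norm (pochhammer b k / pochhammer a k * y ^ k / fact k))"
      by (simp add: r_def pochhammer_Suc abs_mult power_abs abs_of_pos) (simp add: field_simps)
    then show "norm (norm (pochhammer b (Suc k) / pochhammer a (Suc k) * y ^ Suc k / fact (Suc k)))
        \<le> 1/2 * norm (norm (pochhammer b k / pochhammer a k * y ^ k / fact k))"
      unfolding ratio using N[OF \<open>k \<ge> N\<close>] by (intro mult_right_mono) auto
  qed simp
qed

lemma pochhammer_minus_of_nat_div_fact:
  assumes "i \<le> k"
  shows "pochhammer (- real k) i / fact i = (-1) ^ i * (fact k / (fact i * fact (k - i)))"
proof -
  have "pochhammer (- real k) i / fact i = (-1) ^ i * (real k gchoose i)"
    by (simp add: gbinomial_pochhammer flip: power_mult_distrib)
  also have "(real k gchoose i) = fact k / (fact i * fact (k - i))"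
    using assms by (simp add: binomial_fact flip: binomial_gbinomial)
  finally show ?thesis .
qed

lemma kummer_Cauchy_product_coeff:
  fixes a b y :: real
  assumes "a > 0"
  shows "(\<Sum>i\<le>k. pochhammer b i / pochhammer a i * y ^ i / fact i * ((- y) ^ (k - i) / fact (k - i)))
    = pochhammer (a - b) k / pochhammer a k * (- y) ^ k / fact k"
proof -
  have summand: "pochhammer b i / pochhammer a i * y ^ i / fact i * ((- y) ^ (k - i) / fact (k - i))
      = ((- y) ^ k / fact k) * (pochhammer b i * pochhammer (- of_nat k) i / (of_nat (fact i) * pochhammer a i))"
    if "i \<le> k" for i
  proof -
    have "(- y) ^ k = (- y) ^ i * (- y) ^ (k - i)"
      using that by (simp flip: power_add)
    then have y: "y ^ i * (- y) ^ (k - i) = (-1) ^ i * (- y) ^ k"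
      by (simp add: power_minus' algebra_simps)
    have pochhammer: "pochhammer (- real k) i = (-1) ^ i * (fact k / (fact i * fact (k - i))) * fact i"
      using pochhammer_minus_of_nat_div_fact[OF that] by (simp add: field_simps)
    show ?thesis
      unfolding pochhammer using y by (simp add: field_simps)
  qed
  have "(\<Sum>i\<le>k. pochhammer b i / pochhammer a i * y ^ i / fact i * ((- y) ^ (k - i) / fact (k - i)))
      = ((- y) ^ k / fact k) *
        (\<Sum>i\<in>{0..k}. pochhammer b i * pochhammer (- of_nat k) i / (of_nat (fact i) * pochhammer a i))"
    unfolding sum_distrib_left atMost_atLeast0 by (intro sum.cong refl summand) simp
  also have "(\<Sum>i\<in>{0..k}. pochhammer b i * pochhammer (- of_nat k) i / (of_nat (fact i) * pochhammer a i))
      = pochhammer (a - b) k / pochhammer a k"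
    by (rule Vandermonde_pochhammer) (use assms in auto)
  finally show ?thesis
    by (simp add: mult_ac)
qed

lemma kummerM_transformation:
  fixes a b y :: real
  assumes "a > 0"
  shows "kummerM b a y = exp y * kummerM (a - b) a (- y)"
proof -
  have "summable (\<lambda>i. norm (pochhammer b i / pochhammer a i * y ^ i / fact i))"
    by (rule summable_kummer_series[OF assms])
  moreover have "summable (\<lambda>j. norm ((- y) ^ j / fact j))"
    using summable_exp[of "\<bar>y\<bar>"] by (simp add: abs_mult power_abs divide_inverse mult.commute)
  ultimately have "kummerM b a y * (\<Sum>j. (- y) ^ j / fact j)
      = (\<Sum>k. \<Sum>i\<le>k. pochhammer b i / pochhammer a i * y ^ i / fact i * ((- y) ^ (k - i) / fact (k - i)))"
    unfolding kummerM_def by (rule Cauchy_product)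
  also have "(\<Sum>j. (- y) ^ j / fact j) = exp (- y)"
    using exp_converges[of "- y"] by (simp add: sums_iff divide_inverse_commute scaleR_conv_of_real)
  finally have "kummerM b a y * exp (- y) = kummerM (a - b) a (- y)"
    unfolding kummer_Cauchy_product_coeff[OF assms] kummerM_def .
  then show ?thesis
    by (simp add: exp_minus field_simps)
qed

lemma kummerM_nonneg:
  fixes a b x :: real
  assumes "a > 0" "b > 0" "x \<ge> 0"
  shows "kummerM b a x \<ge> 0"
  unfolding kummerM_def
  by (intro suminf_nonneg summable_norm_cancel[OF summable_kummer_series] divide_nonneg_nonneg
      mult_nonneg_nonneg pochhammer_nonneg) (use assms in auto)

section \<open>The confluent limit function 0F1\<close>

definition hyp0F1 :: "real \<Rightarrow> real \<Rightarrow> real" where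
  "hyp0F1 a s = (\<Sum>k. s ^ k / (pochhammer a k * fact k))"

lemma pochhammer_ge_power:
  fixes a :: "'a :: linordered_semidom"
  assumes "a > 0"
  shows "a ^ k \<le> pochhammer a k"
proof (induction k)
  case (Suc k)
  have "a ^ Suc k = a ^ k * a"
    by (simp add: mult.commute)
  also have "\<dots> \<le> pochhammer a k * (a + of_nat k)"
    using Suc assms by (intro mult_mono) (auto simp: pochhammer_nonneg)
  finally show ?case
    by (simp add: pochhammer_Suc)
qed simp

lemma summable_hyp0F1:
  fixes a s :: real
  assumes "a > 0" "s \<ge> 0"
  shows "summable (\<lambda>k. s ^ k / (pochhammer a k * fact k))"
proof (rule summable_comparison_test'[OF summable_exp[of "s / a"]])
  fix k :: nat
  have "s ^ k / (pochhammer a k * fact k) \<le> s ^ k / (a ^ k * fact k)"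
    using assms pochhammer_ge_power[OF \<open>a > 0\<close>, of k]
    by (intro divide_left_mono mult_right_mono mult_pos_pos) (auto intro: pochhammer_pos)
  also have "\<dots> = inverse (fact k) * (s / a) ^ k"
    by (simp add: power_divide field_simps)
  finally show "norm (s ^ k / (pochhammer a k * fact k)) \<le> inverse (fact k) * (s / a) ^ k"
    using assms pochhammer_pos[OF \<open>a > 0\<close>, of k] by simp
qed

lemma hyp0F1_nonneg: "a > 0 \<Longrightarrow> s \<ge> 0 \<Longrightarrow> hyp0F1 a s \<ge> 0"
  unfolding hyp0F1_def
  by (intro suminf_nonneg summable_hyp0F1) (auto intro!: divide_nonneg_pos mult_pos_pos pochhammer_pos)

lemma Gamma_add_of_nat:
  fixes a :: real
  assumes "a > 0"
  shows "Gamma (a + real k) = Gamma a * pochhammer a k"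
proof -
  have "a \<notin> \<int>\<^sub>\<le>\<^sub>0"
    using assms nonpos_Ints_nonpos by fastforce
  then show ?thesis
    using pochhammer_Gamma[of a k] Gamma_real_pos[OF assms] by simp
qed

lemma Gamma_conv_set_nn_integral:
  fixes a :: real
  assumes "a > 0"
  shows "ennreal (Gamma a) = (\<integral>\<^sup>+t\<in>{0<..}. ennreal (t powr (a - 1) * exp (- t)) \<partial>lborel)"
  unfolding Gamma_conv_nn_integral_real[OF assms]
  by (intro nn_integral_cong) (auto simp: indicator_def exp_minus field_simps)

lemma set_nn_integral_cmult_real:
  fixes c :: real and g :: "'a \<Rightarrow> real"
  assumes [measurable]: "g \<in> borel_measurable M" "S \<in> sets M" and "c \<ge> 0"
  shows "(\<integral>\<^sup>+x\<in>S. ennreal (c * g x) \<partial>M) = ennreal c * (\<integral>\<^sup>+x\<in>S. ennreal (g x) \<partial>M)"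
  using \<open>c \<ge> 0\<close> by (subst nn_integral_cmult[symmetric]) (auto simp: ennreal_mult' mult.assoc)

lemma set_nn_integral_sums:
  fixes f :: "nat \<Rightarrow> 'a \<Rightarrow> real" and I :: "nat \<Rightarrow> real"
  assumes [measurable]: "\<And>k. f k \<in> borel_measurable M" "S \<in> sets M"
    and nonneg: "\<And>k x. x \<in> S \<Longrightarrow> 0 \<le> f k x" "\<And>k. 0 \<le> I k"
    and sums: "\<And>x. x \<in> S \<Longrightarrow> (\<lambda>k. f k x) sums F x"
    and integral: "\<And>k. (\<integral>\<^sup>+x\<in>S. ennreal (f k x) \<partial>M) = ennreal (I k)"
    and "I sums s"
  shows "(\<integral>\<^sup>+x\<in>S. ennreal (F x) \<partial>M) = ennreal s"
proof -
  have "(\<integral>\<^sup>+x\<in>S. ennreal (F x) \<partial>M) = (\<integral>\<^sup>+x. (\<Sum>k. ennreal (f k x) * indicator S x) \<partial>M)"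
    using suminf_ennreal_eq[OF nonneg(1) sums] by (intro nn_integral_cong) (auto split: split_indicator)
  also have "\<dots> = (\<Sum>k. \<integral>\<^sup>+x\<in>S. ennreal (f k x) \<partial>M)"
    by (rule nn_integral_suminf) measurable
  also have "\<dots> = ennreal s"
    unfolding integral using suminf_ennreal_eq[OF nonneg(2) \<open>I sums s\<close>] .
  finally show ?thesis .
qed

text \<open>Termwise: the Gamma integral turns t ^ k into Gamma (a + k) = Gamma a * pochhammer a k.\<close>
lemma Gamma_mult_kummerM_nn_integral:
  fixes a \<alpha> x :: real
  assumes a: "a > 0" and \<alpha>: "\<alpha> > 0" and x: "x \<ge> 0"
  shows "ennreal (Gamma a * kummerM a \<alpha> x) =
    (\<integral>\<^sup>+t\<in>{0<..}. ennreal (t powr (a - 1) * exp (- t) * hyp0F1 \<alpha> (x * t)) \<partial>lborel)"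
proof -
  define c where "c k = x ^ k / (pochhammer \<alpha> k * fact k)" for k
  have c_nonneg: "c k \<ge> 0" for k
    unfolding c_def using x \<alpha> by (auto intro!: divide_nonneg_pos mult_pos_pos pochhammer_pos)
  show ?thesis
  proof (rule set_nn_integral_sums[where f = "\<lambda>k t. c k * (t powr (a + real k - 1) * exp (- t))"
        and I = "\<lambda>k. c k * Gamma (a + real k)", symmetric])
    fix t :: real
    assume "t \<in> {0<..}"
    have "(\<lambda>k. (x * t) ^ k / (pochhammer \<alpha> k * fact k)) sums hyp0F1 \<alpha> (x * t)"
      unfolding hyp0F1_def using summable_hyp0F1[OF \<alpha>, of "x * t"] x \<open>t \<in> {0<..}\<close>
      by (simp add: summable_sums)
    then have "(\<lambda>k. t powr (a - 1) * exp (- t) * ((x * t) ^ k / (pochhammer \<alpha> k * fact k)))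
        sums (t powr (a - 1) * exp (- t) * hyp0F1 \<alpha> (x * t))"
      by (rule sums_mult)
    moreover have "c k * (t powr (a + real k - 1) * exp (- t))
        = t powr (a - 1) * exp (- t) * ((x * t) ^ k / (pochhammer \<alpha> k * fact k))" for k
      using \<open>t \<in> {0<..}\<close> by (simp add: c_def powr_add powr_realpow power_mult_distrib powr_diff field_simps)
    ultimately show "(\<lambda>k. c k * (t powr (a + real k - 1) * exp (- t))) sums (t powr (a - 1) * exp (- t) * hyp0F1 \<alpha> (x * t))"
      by simp
  next
    fix k
    show "(\<integral>\<^sup>+t\<in>{0<..}. ennreal (c k * (t powr (a + real k - 1) * exp (- t))) \<partial>lborel)
        = ennreal (c k * Gamma (a + real k))"
      using a c_nonneg[of k] by (subst set_nn_integral_cmult_real) (simp_all add: Gamma_conv_set_nn_integral ennreal_mult')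
  next
    have "(\<lambda>k. pochhammer a k / pochhammer \<alpha> k * x ^ k / fact k) sums kummerM a \<alpha> x"
      unfolding kummerM_def using summable_norm_cancel[OF summable_kummer_series[OF \<alpha>, of a x]]
      by (rule summable_sums)
    then have "(\<lambda>k. Gamma a * (pochhammer a k / pochhammer \<alpha> k * x ^ k / fact k)) sums (Gamma a * kummerM a \<alpha> x)"
      by (rule sums_mult)
    moreover have "c k * Gamma (a + real k) = Gamma a * (pochhammer a k / pochhammer \<alpha> k * x ^ k / fact k)" for k
      by (simp add: c_def Gamma_add_of_nat[OF a])
    ultimately show "(\<lambda>k. c k * Gamma (a + real k)) sums (Gamma a * kummerM a \<alpha> x)"
      by simp
  qed (use a c_nonneg in auto)
qed

lemma cosh_two_sqrt_sums:
  fixes s :: real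
  assumes "s \<ge> 0"
  shows "(\<lambda>k. (4 * s) ^ k / fact (2 * k)) sums cosh (2 * sqrt s)"
proof -
  define w where "w = 2 * sqrt s"
  have "(\<lambda>n. if even n then w ^ n /\<^sub>R fact n else 0) sums cosh w"
    by (rule cosh_converges)
  then have "(\<lambda>k. w ^ (2 * k) /\<^sub>R fact (2 * k)) sums cosh w"
    by (subst (asm) sums_mono_reindex[of "\<lambda>k. 2 * k", symmetric])
       (auto simp: strict_mono_def elim!: oddE)
  moreover have "w ^ (2 * k) = (4 * s) ^ k" for k
    unfolding w_def using assms by (simp add: power_mult power_mult_distrib)
  ultimately show ?thesis
    unfolding w_def by (simp add: divide_inverse_commute scaleR_conv_of_real)
qed

lemma exp_div_two_le_cosh: "exp w / 2 \<le> cosh (w :: real)"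
  unfolding cosh_def by (simp add: scaleR_conv_of_real)

lemma cosh_le_exp:
  fixes w :: real
  assumes "w \<ge> 0"
  shows "cosh w \<le> exp w"
proof -
  have "exp (- w) \<le> exp w"
    using assms by simp
  then show ?thesis
    unfolding cosh_def by (simp add: scaleR_conv_of_real)
qed

lemma hyp0F1_one_half:
  assumes "s \<ge> 0"
  shows "hyp0F1 (1/2) s = cosh (2 * sqrt s)"
proof -
  have "s ^ k / (pochhammer (1/2) k * fact k) = (4 * s) ^ k / fact (2 * k)" for k
    by (simp add: fact_double power_mult power_mult_distrib)
  then show ?thesis
    unfolding hyp0F1_def using sums_unique[OF cosh_two_sqrt_sums[OF assms]] by simp
qed

lemma nn_integral_Beta:
  fixes a b :: real
  assumes "a > 0" "b > 0"
  shows "(\<integral>\<^sup>+v\<in>{0..1}. ennreal (v powr (a - 1) * (1 - v) powr (b - 1)) \<partial>lborel) = ennreal (Beta a b)"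
proof -
  have "(\<integral>\<^sup>+v\<in>{0..1}. ennreal (v powr (a - 1) * (1 - v) powr (b - 1)) \<partial>lborel)
      = (\<integral>\<^sup>+v. ennreal (indicator {0..1} v * (v powr (a - 1) * (1 - v) powr (b - 1))) \<partial>lborel)"
    by (intro nn_integral_cong) (simp split: split_indicator)
  then show ?thesis
    using nn_integral_has_integral_lebesgue[OF _ has_integral_Beta_real[OF assms]] by simp
qed

lemma Beta_real_pos: "a > 0 \<Longrightarrow> b > 0 \<Longrightarrow> Beta a b > (0 :: real)"
  unfolding Beta_def by simp

lemma Beta_add_of_nat:
  fixes a b :: real
  assumes "a > 0" "b > 0"
  shows "Beta (a + real k) b = Beta a b * pochhammer a k / pochhammer (a + b) k"
proof -
  have "Gamma (a + real k + b) = Gamma (a + b) * pochhammer (a + b) k"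
    using Gamma_add_of_nat[of "a + b" k] assms by (simp add: add_ac)
  moreover have "pochhammer (a + b) k > 0" "Gamma (a + b) > 0"
    using assms by (auto intro: pochhammer_pos)
  ultimately show ?thesis
    using assms unfolding Beta_def by (simp add: Gamma_add_of_nat field_simps)
qed

lemma cosh_coeff_mult_Beta:
  fixes \<alpha> s :: real
  assumes "\<alpha> > 1/2"
  shows "(4 * s) ^ k / fact (2 * k) * Beta (1/2 + real k) (\<alpha> - 1/2)
    = Beta (1/2) (\<alpha> - 1/2) * (s ^ k / (pochhammer \<alpha> k * fact k))"
proof -
  have Beta: "Beta (1/2 + real k) (\<alpha> - 1/2) = Beta (1/2) (\<alpha> - 1/2) * pochhammer (1/2) k / pochhammer \<alpha> k"
    using Beta_add_of_nat[of "1/2" "\<alpha> - 1/2" k] assms by simp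
  have fact: "fact (2 * k) = (4::real) ^ k * pochhammer (1/2) k * fact k"
    by (simp add: fact_double power_mult)
  have "pochhammer (1/2::real) k > 0" "pochhammer \<alpha> k > 0"
    using assms by (auto intro: pochhammer_pos)
  then show ?thesis
    unfolding Beta fact by (simp add: power_mult_distrib field_simps)
qed

definition hyp0F1_kernel :: "real \<Rightarrow> real \<Rightarrow> real \<Rightarrow> real" where
  "hyp0F1_kernel \<alpha> s v = cosh (2 * sqrt (s * v)) * v powr (-1/2) * (1 - v) powr (\<alpha> - 3/2)"

text \<open>Integrate the series of cosh termwise against the Beta density.\<close>
lemma hyp0F1_Poisson_integral:
  fixes \<alpha> s :: real
  assumes \<alpha>: "\<alpha> > 1/2" and s: "s \<ge> 0"
  shows "ennreal (Beta (1/2) (\<alpha> - 1/2) * hyp0F1 \<alpha> s) =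
    (\<integral>\<^sup>+v\<in>{0..1}. ennreal (hyp0F1_kernel \<alpha> s v) \<partial>lborel)"
proof -
  define c where "c k = (4 * s) ^ k / fact (2 * k)" for k :: nat
  have c_nonneg: "c k \<ge> 0" for k
    unfolding c_def using s by simp
  show ?thesis
  proof (rule set_nn_integral_sums[where f = "\<lambda>k v. c k * (v powr (1/2 + real k - 1) * (1 - v) powr (\<alpha> - 1/2 - 1))"
        and I = "\<lambda>k. c k * Beta (1/2 + real k) (\<alpha> - 1/2)", symmetric])
    fix v :: real
    assume v: "v \<in> {0..1}"
    have "(\<lambda>k. c k * v ^ k) sums cosh (2 * sqrt (s * v))"
      using cosh_two_sqrt_sums[of "s * v"] s v by (simp add: c_def power_mult_distrib mult_ac)
    then have "(\<lambda>k. c k * v ^ k * (v powr (-1/2) * (1 - v) powr (\<alpha> - 3/2)))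
        sums (cosh (2 * sqrt (s * v)) * (v powr (-1/2) * (1 - v) powr (\<alpha> - 3/2)))"
      by (rule sums_mult2)
    moreover have "v powr (1/2 + real k - 1) = v ^ k * v powr (-1/2)" for k
      using v by (cases "v = 0") (auto simp: powr_add[symmetric] powr_realpow[symmetric] algebra_simps)
    ultimately show "(\<lambda>k. c k * (v powr (1/2 + real k - 1) * (1 - v) powr (\<alpha> - 1/2 - 1)))
        sums hyp0F1_kernel \<alpha> s v"
      by (simp add: hyp0F1_kernel_def mult_ac)
  next
    fix k
    have "(\<integral>\<^sup>+v\<in>{0..1}. ennreal (c k * (v powr (1/2 + real k - 1) * (1 - v) powr (\<alpha> - 1/2 - 1))) \<partial>lborel)
        = ennreal (c k) * (\<integral>\<^sup>+v\<in>{0..1}. ennreal (v powr (1/2 + real k - 1) * (1 - v) powr (\<alpha> - 1/2 - 1)) \<partial>lborel)"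
      using c_nonneg by (intro set_nn_integral_cmult_real) auto
    also have "\<dots> = ennreal (c k * Beta (1/2 + real k) (\<alpha> - 1/2))"
      using \<alpha> c_nonneg[of k] by (subst nn_integral_Beta) (auto simp: ennreal_mult')
    finally show "(\<integral>\<^sup>+v\<in>{0..1}. ennreal (c k * (v powr (1/2 + real k - 1) * (1 - v) powr (\<alpha> - 1/2 - 1))) \<partial>lborel)
        = ennreal (c k * Beta (1/2 + real k) (\<alpha> - 1/2))" .
  next
    have "(\<lambda>k. s ^ k / (pochhammer \<alpha> k * fact k)) sums hyp0F1 \<alpha> s"
      unfolding hyp0F1_def using summable_hyp0F1[of \<alpha> s] \<alpha> s by (simp add: summable_sums)
    then have "(\<lambda>k. Beta (1/2) (\<alpha> - 1/2) * (s ^ k / (pochhammer \<alpha> k * fact k)))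
        sums (Beta (1/2) (\<alpha> - 1/2) * hyp0F1 \<alpha> s)"
      by (rule sums_mult)
    moreover have "c k * Beta (1/2 + real k) (\<alpha> - 1/2)
        = Beta (1/2) (\<alpha> - 1/2) * (s ^ k / (pochhammer \<alpha> k * fact k))" for k
      unfolding c_def using \<alpha> by (rule cosh_coeff_mult_Beta)
    ultimately show "(\<lambda>k. c k * Beta (1/2 + real k) (\<alpha> - 1/2)) sums (Beta (1/2) (\<alpha> - 1/2) * hyp0F1 \<alpha> s)"
      by simp
  qed (use \<alpha> c_nonneg in \<open>auto intro!: mult_nonneg_nonneg less_imp_le[OF Beta_real_pos]\<close>)
qed

section \<open>Two-sided bounds for 0F1\<close>

lemma hyp0F1_kernel_lower:
  fixes \<alpha> s v :: real
  defines "w \<equiv> 2 * sqrt s"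
  assumes \<alpha>: "\<alpha> \<le> 3/2" and s: "s \<ge> 1" and v: "1 - 1 / w \<le> v" "v < 1"
  shows "exp (w - 1) / 2 * w powr (3/2 - \<alpha>) \<le> hyp0F1_kernel \<alpha> s v"
proof -
  have w: "w \<ge> 2"
    unfolding w_def using s by simp
  then have "1 / w \<le> 1/2"
    by simp
  then have "0 < v"
    using v by linarith
  have "w - 1 = w * (1 - 1 / w)"
    using w by (simp add: field_simps)
  also have "\<dots> \<le> w * v"
    using v w by (intro mult_left_mono) auto
  also have "\<dots> \<le> w * sqrt v"
    using v \<open>0 < v\<close> w by (intro mult_left_mono real_le_rsqrt) (auto simp: power2_eq_square mult_left_le_one_le)
  also have "\<dots> = 2 * sqrt (s * v)"
    unfolding w_def by (simp add: real_sqrt_mult)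
  finally have "exp (w - 1) \<le> exp (2 * sqrt (s * v))"
    by simp
  then have "exp (w - 1) / 2 \<le> cosh (2 * sqrt (s * v))"
    using exp_div_two_le_cosh[of "2 * sqrt (s * v)"] by linarith
  moreover have "1 \<le> v powr (-1/2)"
    using v \<open>0 < v\<close> by (simp add: powr_minus_divide powr_half_sqrt)
  moreover have "w powr (3/2 - \<alpha>) \<le> (1 - v) powr (\<alpha> - 3/2)"
  proof -
    have "w powr (3/2 - \<alpha>) = (1 / w) powr (\<alpha> - 3/2)"
      using w by (simp add: powr_divide powr_minus_divide[symmetric])
    also have "\<dots> \<le> (1 - v) powr (\<alpha> - 3/2)"
      using \<alpha> v by (intro powr_mono2') auto
    finally show ?thesis .
  qed
  ultimately have "exp (w - 1) / 2 * 1 * w powr (3/2 - \<alpha>) \<le> hyp0F1_kernel \<alpha> s v"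
    unfolding hyp0F1_kernel_def by (intro mult_mono) auto
  then show ?thesis
    by simp
qed

text \<open>Only the part 1 - 1/w \<le> v < 1 of the integral is kept; there the factor cosh is
  at least exp (w - 1) / 2.\<close>
lemma Beta_mult_hyp0F1_lower:
  fixes \<alpha> s :: real
  assumes \<alpha>: "1/2 < \<alpha>" "\<alpha> \<le> 3/2" and s: "s \<ge> 1"
  defines "w \<equiv> 2 * sqrt s"
  shows "exp (w - 1) / 2 * w powr (1/2 - \<alpha>) \<le> Beta (1/2) (\<alpha> - 1/2) * hyp0F1 \<alpha> s"
proof -
  have w: "w \<ge> 2"
    unfolding w_def using s by simp
  define L where "L = exp (w - 1) / 2 * w powr (3/2 - \<alpha>)"
  have scaling: "exp (w - 1) / 2 * w powr (1/2 - \<alpha>) = L * (1 / w)"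
    using powr_add[of w "1/2 - \<alpha>" 1] w by (simp add: L_def)
  have "ennreal (exp (w - 1) / 2 * w powr (1/2 - \<alpha>)) = ennreal L * ennreal (1 / w)"
    unfolding scaling by (rule ennreal_mult') (simp add: L_def)
  also have "\<dots> = (\<integral>\<^sup>+v. ennreal L * indicator {1 - 1 / w..<1} v \<partial>lborel)"
    using w by (subst nn_integral_cmult_indicator) auto
  also have "\<dots> \<le> (\<integral>\<^sup>+v\<in>{0..1}. ennreal (hyp0F1_kernel \<alpha> s v) \<partial>lborel)"
  proof (intro nn_integral_mono)
    fix v :: real
    show "ennreal L * indicator {1 - 1 / w..<1} v \<le> ennreal (hyp0F1_kernel \<alpha> s v) * indicator {0..1} v"
    proof (cases "v \<in> {1 - 1 / w..<1}")
      case True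
      moreover have "0 \<le> 1 - 1 / w"
        using w by simp
      ultimately have "v \<in> {0..1}"
        by auto
      have "L \<le> hyp0F1_kernel \<alpha> s v"
        using True hyp0F1_kernel_lower[of \<alpha> s v] \<alpha> s unfolding L_def w_def by simp
      then show ?thesis
        using True \<open>v \<in> {0..1}\<close> by (simp add: ennreal_leI)
    qed simp
  qed
  also have "\<dots> = ennreal (Beta (1/2) (\<alpha> - 1/2) * hyp0F1 \<alpha> s)"
    using \<alpha> s by (intro hyp0F1_Poisson_integral[symmetric]) auto
  finally have "ennreal (exp (w - 1) / 2 * w powr (1/2 - \<alpha>))
      \<le> ennreal (Beta (1/2) (\<alpha> - 1/2) * hyp0F1 \<alpha> s)" .
  moreover have "0 \<le> Beta (1/2) (\<alpha> - 1/2) * hyp0F1 \<alpha> s"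
    using \<alpha> s by (intro mult_nonneg_nonneg less_imp_le[OF Beta_real_pos] hyp0F1_nonneg) auto
  ultimately show ?thesis
    by (simp add: ennreal_le_iff)
qed

lemma nn_integral_Gamma_scaled:
  fixes p c :: real
  assumes p: "p > 0" and c: "c > 0"
  shows "(\<integral>\<^sup>+r\<in>{0<..}. ennreal (exp (- (c * r)) * r powr (p - 1)) \<partial>lborel) = ennreal (c powr (- p) * Gamma p)"
proof -
  have "(\<integral>\<^sup>+r\<in>{0<..}. ennreal (exp (- (c * r)) * r powr (p - 1)) \<partial>lborel)
      = ennreal (1 / c) * (\<integral>\<^sup>+x. ennreal (exp (- x) * (x / c) powr (p - 1)) * indicator {0<..} (x / c) \<partial>lborel)"
    using nn_integral_real_affine[of "\<lambda>r. ennreal (exp (- (c * r)) * r powr (p - 1)) * indicator {0<..} r" "1 / c" 0] c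
    by simp
  also have "(\<lambda>x. ennreal (exp (- x) * (x / c) powr (p - 1)) * indicator {0<..} (x / c))
      = (\<lambda>x. ennreal (c powr (1 - p)) * (ennreal (x powr (p - 1) * exp (- x)) * indicator {0<..} x))"
    using c by (auto simp: indicator_def powr_divide powr_diff field_simps simp flip: ennreal_mult' intro!: ext)
  also have "(\<integral>\<^sup>+x. ennreal (c powr (1 - p)) * (ennreal (x powr (p - 1) * exp (- x)) * indicator {0<..} x) \<partial>lborel)
      = ennreal (c powr (1 - p)) * ennreal (Gamma p)"
    by (subst nn_integral_cmult) (auto simp: Gamma_conv_set_nn_integral[OF p])
  also have "ennreal (1 / c) * (ennreal (c powr (1 - p)) * ennreal (Gamma p)) = ennreal (c powr (- p) * Gamma p)"
    using c by (simp add: powr_diff powr_minus_divide ennreal_mult'[symmetric] mult.assoc[symmetric] del: ennreal_mult')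
  finally show ?thesis .
qed

lemma nn_integral_Gamma_scaled_reflected:
  fixes p c :: real
  assumes "p > 0" "c > 0"
  shows "(\<integral>\<^sup>+v\<in>{..<1}. ennreal (exp (- (c * (1 - v))) * (1 - v) powr (p - 1)) \<partial>lborel)
    = ennreal (c powr (- p) * Gamma p)"
proof -
  have "(\<integral>\<^sup>+v\<in>{..<1}. ennreal (exp (- (c * (1 - v))) * (1 - v) powr (p - 1)) \<partial>lborel)
      = (\<integral>\<^sup>+r\<in>{0<..}. ennreal (exp (- (c * r)) * r powr (p - 1)) \<partial>lborel)"
    using nn_integral_real_affine[of "\<lambda>r. ennreal (exp (- (c * r)) * r powr (p - 1)) * indicator {0<..} r" "-1" 1]
    by (simp add: indicator_def)
  also have "\<dots> = ennreal (c powr (- p) * Gamma p)"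
    by (rule nn_integral_Gamma_scaled[OF assms])
  finally show ?thesis .
qed

lemma exp_three_quarters_le_powr:
  fixes w p :: real
  assumes w: "w > 0" and p: "0 < p" "p < 1"
  shows "exp (3 * w / 4) \<le> 4 * exp w * w powr (- p)"
proof -
  have "w powr p \<le> 1 + w"
    using w p by (cases "w \<le> 1") (auto intro: order_trans[OF powr_le1] order_trans[OF powr_mono, of _ 1])
  also have "\<dots> \<le> 4 * exp (w / 4)"
    using exp_ge_add_one_self[of "w / 4"] by linarith
  finally have "exp (3 * w / 4) * w powr p \<le> exp (3 * w / 4) * (4 * exp (w / 4))"
    by (intro mult_left_mono) auto
  also have "\<dots> = 4 * exp w"
    by (simp flip: exp_add)
  finally show ?thesis
    using w by (simp add: powr_minus_divide field_simps)
qed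

lemma hyp0F1_kernel_upper:
  fixes \<alpha> s v :: real
  defines "w \<equiv> 2 * sqrt s"
  assumes s: "s > 0" and v: "0 < v" "v < 1"
  shows "hyp0F1_kernel \<alpha> s v \<le> exp (3 * w / 4) * (v powr (1/2 - 1) * (1 - v) powr (\<alpha> - 1/2 - 1))
    + sqrt 2 * exp w * (exp (- (w / 2 * (1 - v))) * (1 - v) powr (\<alpha> - 1/2 - 1))"
    (is "_ \<le> ?near0 + ?near1")
proof -
  have "cosh (2 * sqrt (s * v)) \<le> exp (w * sqrt v)"
    using cosh_le_exp[of "2 * sqrt (s * v)"] s v by (simp add: w_def real_sqrt_mult mult.assoc)
  also have "\<dots> \<le> exp (w * ((1 + v) / 2))"
    using arith_geo_mean_sqrt[of 1 v] v s by (simp add: w_def)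
  finally have cosh: "cosh (2 * sqrt (s * v)) \<le> exp (w * ((1 + v) / 2))" .
  have "?near0 \<ge> 0" "?near1 \<ge> 0"
    by simp_all
  moreover consider "v < 1/2" | "v \<ge> 1/2"
    by linarith
  then have "hyp0F1_kernel \<alpha> s v \<le> ?near0 \<or> hyp0F1_kernel \<alpha> s v \<le> ?near1"
  proof cases
    case 1
    have "exp (w * ((1 + v) / 2)) \<le> exp (3 * w / 4)"
      using 1 s by (simp add: w_def field_simps)
    then have "cosh (2 * sqrt (s * v)) \<le> exp (3 * w / 4)"
      using cosh by linarith
    then show ?thesis
      unfolding hyp0F1_kernel_def by (simp add: mult.assoc mult_right_mono)
  next
    case 2
    have "v powr (-1/2) = 1 / sqrt v"
      using v by (simp add: powr_minus_divide powr_half_sqrt)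
    also have "\<dots> \<le> 1 / sqrt (1/2)"
      using 2 v by (intro divide_left_mono) auto
    also have "\<dots> = sqrt 2"
      by (simp add: real_sqrt_divide)
    finally have "hyp0F1_kernel \<alpha> s v \<le> exp (w * ((1 + v) / 2)) * sqrt 2 * (1 - v) powr (\<alpha> - 3/2)"
      unfolding hyp0F1_kernel_def using cosh by (intro mult_right_mono mult_mono) auto
    also have "\<dots> = ?near1"
      by (simp add: mult_ac flip: exp_add) (simp add: field_simps)
    finally show ?thesis ..
  qed
  ultimately show ?thesis
    by linarith
qed

text \<open>Away from v = 1 the factor cosh is at most exp (3 w / 4); near v = 1 what remains is a
  Gamma integral in 1 - v.\<close>
lemma Beta_mult_hyp0F1_le_sum:
  fixes \<alpha> s :: real
  defines "w \<equiv> 2 * sqrt s"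
  assumes \<alpha>: "1/2 < \<alpha>" and s: "s > 0"
  shows "ennreal (Beta (1/2) (\<alpha> - 1/2) * hyp0F1 \<alpha> s)
    \<le> ennreal (exp (3 * w / 4)) * ennreal (Beta (1/2) (\<alpha> - 1/2))
      + ennreal (sqrt 2 * exp w) * ennreal ((w / 2) powr (1/2 - \<alpha>) * Gamma (\<alpha> - 1/2))"
proof -
  define p where "p = \<alpha> - 1/2"
  have p: "p > 0" and w: "w > 0"
    using \<alpha> s by (auto simp: p_def w_def)
  define B where "B v = v powr (1/2 - 1) * (1 - v) powr (p - 1)" for v
  define g where "g v = exp (- (w / 2 * (1 - v))) * (1 - v) powr (p - 1)" for v
  have Beta_integral: "(\<integral>\<^sup>+v\<in>{0..1}. ennreal (B v) \<partial>lborel) = ennreal (Beta (1/2) p)"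
    unfolding B_def using p by (intro nn_integral_Beta) auto
  have Gamma_integral: "(\<integral>\<^sup>+v\<in>{..<1}. ennreal (g v) \<partial>lborel) = ennreal ((w / 2) powr (- p) * Gamma p)"
    unfolding g_def using p w by (intro nn_integral_Gamma_scaled_reflected) auto
  have "ennreal (Beta (1/2) p * hyp0F1 \<alpha> s) = (\<integral>\<^sup>+v\<in>{0..1}. ennreal (hyp0F1_kernel \<alpha> s v) \<partial>lborel)"
    unfolding p_def using \<alpha> s by (intro hyp0F1_Poisson_integral) auto
  also have "\<dots> \<le> (\<integral>\<^sup>+v. ennreal (exp (3 * w / 4)) * (ennreal (B v) * indicator {0..1} v)
        + ennreal (sqrt 2 * exp w) * (ennreal (g v) * indicator {..<1} v) \<partial>lborel)"
  proof (intro nn_integral_mono)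
    fix v :: real
    show "ennreal (hyp0F1_kernel \<alpha> s v) * indicator {0..1} v
        \<le> ennreal (exp (3 * w / 4)) * (ennreal (B v) * indicator {0..1} v)
          + ennreal (sqrt 2 * exp w) * (ennreal (g v) * indicator {..<1} v)"
    proof (cases "0 < v \<and> v < 1")
      case True
      then have "hyp0F1_kernel \<alpha> s v \<le> exp (3 * w / 4) * B v + sqrt 2 * exp w * g v"
        using hyp0F1_kernel_upper[OF s, of v \<alpha>] by (simp add: B_def g_def p_def w_def)
      then have "ennreal (hyp0F1_kernel \<alpha> s v) \<le> ennreal (exp (3 * w / 4) * B v) + ennreal (sqrt 2 * exp w * g v)"
        by (simp add: ennreal_plus[symmetric] B_def g_def ennreal_leI del: ennreal_plus)
      then show ?thesis
        using True by (simp add: ennreal_mult')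
    next
      case False
      then have "ennreal (hyp0F1_kernel \<alpha> s v) * indicator {0..1} v = 0"
        by (cases "v = 0 \<or> v = 1") (auto simp: hyp0F1_kernel_def indicator_def)
      then show ?thesis
        by (metis zero_le)
    qed
  qed
  also have "\<dots> = ennreal (exp (3 * w / 4)) * (\<integral>\<^sup>+v\<in>{0..1}. ennreal (B v) \<partial>lborel)
      + ennreal (sqrt 2 * exp w) * (\<integral>\<^sup>+v\<in>{..<1}. ennreal (g v) \<partial>lborel)"
    by (subst nn_integral_add) (auto simp: B_def g_def nn_integral_cmult)
  also have "\<dots> = ennreal (exp (3 * w / 4)) * ennreal (Beta (1/2) p)
      + ennreal (sqrt 2 * exp w) * ennreal ((w / 2) powr (- p) * Gamma p)"
    unfolding Beta_integral Gamma_integral ..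
  finally show ?thesis
    unfolding p_def minus_diff_eq .
qed

lemma Beta_mult_hyp0F1_upper:
  fixes \<alpha> s :: real
  defines "w \<equiv> 2 * sqrt s"
  assumes \<alpha>: "1/2 < \<alpha>" "\<alpha> < 3/2" and s: "s > 0"
  shows "Beta (1/2) (\<alpha> - 1/2) * hyp0F1 \<alpha> s
    \<le> exp w * w powr (1/2 - \<alpha>) * (4 * Beta (1/2) (\<alpha> - 1/2) + sqrt 2 * 2 powr (\<alpha> - 1/2) * Gamma (\<alpha> - 1/2))"
proof -
  have p: "0 < \<alpha> - 1/2" "\<alpha> - 1/2 < 1" and w: "w > 0"
    using \<alpha> s by (auto simp: w_def)
  have two_powr: "2 powr (1/2 - \<alpha>) * 2 powr (\<alpha> - 1/2) = 1"
    by (simp flip: powr_add)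
  have "0 < Beta (1/2) (\<alpha> - 1/2)" "0 < Gamma (\<alpha> - 1/2)"
    using p by (auto intro: Beta_real_pos)
  then have "ennreal (Beta (1/2) (\<alpha> - 1/2) * hyp0F1 \<alpha> s)
      \<le> ennreal (exp (3 * w / 4) * Beta (1/2) (\<alpha> - 1/2) + sqrt 2 * exp w * ((w / 2) powr (1/2 - \<alpha>) * Gamma (\<alpha> - 1/2)))"
    using Beta_mult_hyp0F1_le_sum[OF \<alpha>(1) s] unfolding w_def
    by (simp add: ennreal_mult'[symmetric] ennreal_plus[symmetric] del: ennreal_plus)
  then have "Beta (1/2) (\<alpha> - 1/2) * hyp0F1 \<alpha> s
      \<le> exp (3 * w / 4) * Beta (1/2) (\<alpha> - 1/2) + sqrt 2 * exp w * ((w / 2) powr (1/2 - \<alpha>) * Gamma (\<alpha> - 1/2))"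
    using \<open>0 < Beta (1/2) (\<alpha> - 1/2)\<close> \<open>0 < Gamma (\<alpha> - 1/2)\<close> by (subst (asm) ennreal_le_iff) auto
  also have "\<dots> \<le> 4 * exp w * w powr (1/2 - \<alpha>) * Beta (1/2) (\<alpha> - 1/2)
      + sqrt 2 * exp w * ((w / 2) powr (1/2 - \<alpha>) * Gamma (\<alpha> - 1/2))"
    using exp_three_quarters_le_powr[OF w p] Beta_real_pos[of "1/2" "\<alpha> - 1/2"] p
    by (intro add_right_mono mult_right_mono) auto
  also have "(w / 2) powr (1/2 - \<alpha>) = 2 powr (\<alpha> - 1/2) * w powr (1/2 - \<alpha>)"
    using w two_powr by (simp add: powr_divide field_simps)
  also have "4 * exp w * w powr (1/2 - \<alpha>) * Beta (1/2) (\<alpha> - 1/2)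
      + sqrt 2 * exp w * (2 powr (\<alpha> - 1/2) * w powr (1/2 - \<alpha>) * Gamma (\<alpha> - 1/2))
      = exp w * w powr (1/2 - \<alpha>) * (4 * Beta (1/2) (\<alpha> - 1/2) + sqrt 2 * 2 powr (\<alpha> - 1/2) * Gamma (\<alpha> - 1/2))"
    by (simp add: algebra_simps)
  finally show ?thesis .
qed

lemma hyp0F1_bounds:
  fixes \<alpha> :: real
  assumes \<alpha>: "1/2 \<le> \<alpha>" "\<alpha> < 3/2"
  obtains c C where "c > 0" "C > 0"
    "\<And>s. s \<ge> 1 \<Longrightarrow> c * (s powr ((1 - 2 * \<alpha>) / 4) * exp (2 * sqrt s)) \<le> hyp0F1 \<alpha> s"
    "\<And>s. s > 0 \<Longrightarrow> hyp0F1 \<alpha> s \<le> C * (s powr ((1 - 2 * \<alpha>) / 4) * exp (2 * sqrt s))"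
proof (cases "\<alpha> = 1/2")
  case True
  then have "s powr ((1 - 2 * \<alpha>) / 4) * exp (2 * sqrt s) = exp (2 * sqrt s)"
    "hyp0F1 \<alpha> s = cosh (2 * sqrt s)" if "s > 0" for s
    using that hyp0F1_one_half[of s] unfolding True by auto
  with that[of "1/2" 1] show ?thesis
    using exp_div_two_le_cosh cosh_le_exp by simp
next
  case False
  then have \<alpha>': "1/2 < \<alpha>"
    using \<alpha> by simp
  define K where "K = Beta (1/2) (\<alpha> - 1/2)"
  define D where "D = 4 * Beta (1/2) (\<alpha> - 1/2) + sqrt 2 * 2 powr (\<alpha> - 1/2) * Gamma (\<alpha> - 1/2)"
  have "K > 0" "D > 0"
    unfolding K_def D_def using \<alpha>' by (auto intro!: add_pos_pos Beta_real_pos)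
  have envelope: "(2 * sqrt s) powr (1/2 - \<alpha>) = 2 powr (1/2 - \<alpha>) * s powr ((1 - 2 * \<alpha>) / 4)" if "s > 0" for s
    using that by (simp add: powr_mult powr_half_sqrt[symmetric] powr_powr field_simps)
  show ?thesis
  proof (rule that[of "exp (-1) / 2 * 2 powr (1/2 - \<alpha>) / K" "D * 2 powr (1/2 - \<alpha>) / K"])
    fix s :: real
    assume "s \<ge> 1"
    then have "exp (2 * sqrt s - 1) / 2 * (2 * sqrt s) powr (1/2 - \<alpha>) \<le> K * hyp0F1 \<alpha> s"
      unfolding K_def using Beta_mult_hyp0F1_lower[of \<alpha> s] \<alpha>' \<alpha> by simp
    then have "exp (2 * sqrt s - 1) / 2 * (2 powr (1/2 - \<alpha>) * s powr ((1 - 2 * \<alpha>) / 4)) \<le> K * hyp0F1 \<alpha> s"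
      using \<open>s \<ge> 1\<close> by (subst (asm) envelope) auto
    then show "exp (-1) / 2 * 2 powr (1/2 - \<alpha>) / K * (s powr ((1 - 2 * \<alpha>) / 4) * exp (2 * sqrt s)) \<le> hyp0F1 \<alpha> s"
      using \<open>K > 0\<close> by (simp add: exp_diff exp_minus field_simps)
  next
    fix s :: real
    assume "s > 0"
    then have "K * hyp0F1 \<alpha> s \<le> exp (2 * sqrt s) * (2 * sqrt s) powr (1/2 - \<alpha>) * D"
      unfolding K_def D_def using Beta_mult_hyp0F1_upper[of \<alpha> s] \<alpha>' \<alpha> by simp
    then have "K * hyp0F1 \<alpha> s \<le> exp (2 * sqrt s) * (2 powr (1/2 - \<alpha>) * s powr ((1 - 2 * \<alpha>) / 4)) * D"
      using \<open>s > 0\<close> by (subst (asm) envelope) auto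
    then show "hyp0F1 \<alpha> s \<le> D * 2 powr (1/2 - \<alpha>) / K * (s powr ((1 - 2 * \<alpha>) / 4) * exp (2 * sqrt s))"
      using \<open>K > 0\<close> by (simp add: field_simps)
  qed (use \<open>K > 0\<close> \<open>D > 0\<close> in auto)
qed

section \<open>Bounds for Kummer's function\<close>

lemma set_nn_integral_atLeastAtMost_LIMSEQ:
  fixes f :: "real \<Rightarrow> ennreal" and b :: "nat \<Rightarrow> real"
  assumes [measurable]: "f \<in> borel_measurable borel"
    and b: "incseq b" "filterlim b at_top sequentially"
  shows "(\<lambda>n. \<integral>\<^sup>+x\<in>{a..b n}. f x \<partial>lborel) \<longlonglongrightarrow> (\<integral>\<^sup>+x\<in>{a..}. f x \<partial>lborel)"
proof (rule nn_integral_LIMSEQ)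
  show "incseq (\<lambda>n x. f x * indicator {a..b n} x)"
  proof (intro incseq_SucI le_funI mult_left_mono)
    fix n x
    show "indicator {a..b n} x \<le> (indicator {a..b (Suc n)} x :: ennreal)"
      using incseq_SucD[OF b(1), of n] by (auto split: split_indicator)
  qed simp
  show "(\<lambda>n. f x * indicator {a..b n} x) \<longlonglongrightarrow> f x * indicator {a..} x" for x
  proof (rule tendsto_eventually)
    have "eventually (\<lambda>n. x \<le> b n) sequentially"
      using b(2) by (simp add: filterlim_at_top)
    then show "eventually (\<lambda>n. f x * indicator {a..b n} x = f x * indicator {a..} x) sequentially"
      by eventually_elim (auto split: split_indicator)
  qed
qed measurable

text \<open>The finite substitution rule applies on [sqrt T, sqrt T + n]; let n tend to infinity.\<close>
lemma nn_integral_substitution_square: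
  fixes f :: "real \<Rightarrow> real"
  assumes [measurable]: "f \<in> borel_measurable borel" and T: "T \<ge> 0"
  shows "(\<integral>\<^sup>+t\<in>{T..}. ennreal (f t) \<partial>lborel) = (\<integral>\<^sup>+u\<in>{sqrt T..}. ennreal (f (u\<^sup>2) * (2 * u)) \<partial>lborel)"
proof -
  define b where "b n = sqrt T + real n" for n :: nat
  have b: "incseq b" "filterlim b at_top sequentially"
    unfolding b_def incseq_def by simp real_asymp
  have b2: "incseq (\<lambda>n. (b n)\<^sup>2)" "filterlim (\<lambda>n. (b n)\<^sup>2) at_top sequentially"
    unfolding b_def incseq_def using T by (auto intro!: power_mono) real_asymp
  have truncated: "(\<integral>\<^sup>+t\<in>{T..(b n)\<^sup>2}. ennreal (f t) \<partial>lborel)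
      = (\<integral>\<^sup>+u\<in>{sqrt T..b n}. ennreal (f (u\<^sup>2) * (2 * u)) \<partial>lborel)" for n
  proof -
    have "sqrt T \<le> b n"
      by (simp add: b_def)
    then have "(\<integral>\<^sup>+t. ennreal (f t * indicator {(sqrt T)\<^sup>2..(b n)\<^sup>2} t) \<partial>lborel)
        = (\<integral>\<^sup>+u. ennreal (f (u\<^sup>2) * (2 * u) * indicator {sqrt T..b n} u) \<partial>lborel)"
      by (intro nn_integral_substitution[where g = "\<lambda>u. u\<^sup>2" and g' = "\<lambda>u. 2 * u"])
         (auto intro!: derivative_eq_intros continuous_intros simp: set_borel_measurable_def
           intro: order_trans[OF real_sqrt_ge_zero[OF T]])
    then show ?thesis
      using T by (simp add: nn_integral_set_ennreal)
  qed
  have "(\<lambda>n. \<integral>\<^sup>+t\<in>{T..(b n)\<^sup>2}. ennreal (f t) \<partial>lborel) \<longlonglongrightarrow> (\<integral>\<^sup>+t\<in>{T..}. ennreal (f t) \<partial>lborel)"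
    using b2 by (intro set_nn_integral_atLeastAtMost_LIMSEQ) auto
  then have "(\<lambda>n. \<integral>\<^sup>+u\<in>{sqrt T..b n}. ennreal (f (u\<^sup>2) * (2 * u)) \<partial>lborel) \<longlonglongrightarrow> (\<integral>\<^sup>+t\<in>{T..}. ennreal (f t) \<partial>lborel)"
    unfolding truncated .
  moreover have "(\<lambda>n. \<integral>\<^sup>+u\<in>{sqrt T..b n}. ennreal (f (u\<^sup>2) * (2 * u)) \<partial>lborel)
      \<longlonglongrightarrow> (\<integral>\<^sup>+u\<in>{sqrt T..}. ennreal (f (u\<^sup>2) * (2 * u)) \<partial>lborel)"
    using b by (intro set_nn_integral_atLeastAtMost_LIMSEQ) auto
  ultimately show ?thesis
    by (rule LIMSEQ_unique)
qed

lemma set_nn_integral_greaterThan_eq_atLeast: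
  fixes f :: "real \<Rightarrow> ennreal"
  shows "(\<integral>\<^sup>+x\<in>{a<..}. f x \<partial>lborel) = (\<integral>\<^sup>+x\<in>{a..}. f x \<partial>lborel)"
  by (intro nn_integral_cong_AE) (use AE_lborel_singleton[of a] in \<open>auto elim!: eventually_mono split: split_indicator\<close>)

lemma kummerG_substitution:
  fixes \<alpha> \<beta> x u :: real
  assumes x: "x > 0" and u: "u > 0"
  shows "(u\<^sup>2) powr (\<alpha> - \<beta> - 1) * exp (- (u\<^sup>2))
      * ((x * u\<^sup>2) powr ((1 - 2 * \<alpha>) / 4) * exp (2 * sqrt (x * u\<^sup>2))) * (2 * u)
    = 2 * x powr ((1 - 2 * \<alpha>) / 4) * exp (kummerG \<alpha> \<beta> (- x) u)"
proof -
  define q where "q = (1 - 2 * \<alpha>) / 4"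
  have "exp (kummerG \<alpha> \<beta> (- x) u) = exp (- (u\<^sup>2) + 2 * sqrt x * u) * u powr (\<alpha> - 2 * \<beta> - 1/2)"
    unfolding kummerG_def using u by (simp add: exp_add powr_def)
  then have G: "exp (kummerG \<alpha> \<beta> (- x) u) = exp (- (u\<^sup>2)) * exp (2 * sqrt x * u) * u powr (\<alpha> - 2 * \<beta> - 1/2)"
    by (simp only: exp_add)
  have u2: "u\<^sup>2 = u powr 2"
    using powr_realpow[OF u, of 2] by simp
  have "(u\<^sup>2) powr (\<alpha> - \<beta> - 1) = u powr (2 * (\<alpha> - \<beta> - 1))" "(u\<^sup>2) powr q = u powr (2 * q)"
    unfolding u2 by (simp_all add: powr_powr)
  then have "(u\<^sup>2) powr (\<alpha> - \<beta> - 1) * (x * u\<^sup>2) powr q * u powr 1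
      = x powr q * (u powr (2 * (\<alpha> - \<beta> - 1)) * u powr (2 * q) * u powr 1)"
    using u x by (simp add: powr_mult)
  also have "\<dots> = x powr q * u powr (2 * (\<alpha> - \<beta> - 1) + 2 * q + 1)"
    by (simp only: powr_add)
  also have "2 * (\<alpha> - \<beta> - 1) + 2 * q + 1 = \<alpha> - 2 * \<beta> - 1/2"
    unfolding q_def by (simp add: field_simps)
  finally have powers: "(u\<^sup>2) powr (\<alpha> - \<beta> - 1) * (x * u\<^sup>2) powr q * (2 * u) = 2 * x powr q * u powr (\<alpha> - 2 * \<beta> - 1/2)"
    using u by (simp add: mult_ac)
  have "(u\<^sup>2) powr (\<alpha> - \<beta> - 1) * exp (- (u\<^sup>2)) * ((x * u\<^sup>2) powr q * exp (2 * sqrt (x * u\<^sup>2))) * (2 * u)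
      = ((u\<^sup>2) powr (\<alpha> - \<beta> - 1) * (x * u\<^sup>2) powr q * (2 * u)) * (exp (- (u\<^sup>2)) * exp (2 * sqrt x * u))"
    using u by (simp add: real_sqrt_mult mult_ac)
  also have "\<dots> = 2 * x powr q * exp (kummerG \<alpha> \<beta> (- x) u)"
    unfolding powers G by (simp add: mult_ac)
  finally show ?thesis
    unfolding q_def .
qed

lemma nn_integral_kummer_envelope:
  fixes \<alpha> \<beta> x T :: real
  assumes x: "x > 0" and T: "T \<ge> 0"
  shows "(\<integral>\<^sup>+t\<in>{T<..}. ennreal (t powr (\<alpha> - \<beta> - 1) * exp (- t)
      * ((x * t) powr ((1 - 2 * \<alpha>) / 4) * exp (2 * sqrt (x * t)))) \<partial>lborel)
    = ennreal (2 * x powr ((1 - 2 * \<alpha>) / 4)) * (\<integral>\<^sup>+u\<in>{sqrt T<..}. ennreal (exp (kummerG \<alpha> \<beta> (- x) u)) \<partial>lborel)"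
proof -
  define q where "q = (1 - 2 * \<alpha>) / 4"
  define f where "f t = t powr (\<alpha> - \<beta> - 1) * exp (- t) * ((x * t) powr q * exp (2 * sqrt (x * t)))" for t
  have "(\<integral>\<^sup>+t\<in>{T<..}. ennreal (f t) \<partial>lborel) = (\<integral>\<^sup>+u\<in>{sqrt T..}. ennreal (f (u\<^sup>2) * (2 * u)) \<partial>lborel)"
    unfolding set_nn_integral_greaterThan_eq_atLeast
    by (rule nn_integral_substitution_square) (use T in \<open>auto simp: f_def\<close>)
  also have "\<dots> = (\<integral>\<^sup>+u\<in>{sqrt T<..}. ennreal (2 * x powr q * exp (kummerG \<alpha> \<beta> (- x) u)) \<partial>lborel)"
    unfolding set_nn_integral_greaterThan_eq_atLeast[symmetric]
  proof (intro nn_integral_cong)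
    fix u :: real
    have "u > sqrt T \<Longrightarrow> u > 0"
      using real_sqrt_ge_zero[OF T] by linarith
    then show "ennreal (f (u\<^sup>2) * (2 * u)) * indicator {sqrt T<..} u
        = ennreal (2 * x powr q * exp (kummerG \<alpha> \<beta> (- x) u)) * indicator {sqrt T<..} u"
      using kummerG_substitution[OF x, of u \<alpha> \<beta>] by (auto simp: f_def q_def split: split_indicator)
  qed
  also have "\<dots> = ennreal (2 * x powr q) * (\<integral>\<^sup>+u\<in>{sqrt T<..}. ennreal (exp (kummerG \<alpha> \<beta> (- x) u)) \<partial>lborel)"
    using x by (intro set_nn_integral_cmult_real) (auto simp: kummerG_def)
  finally show ?thesis
    unfolding f_def q_def .
qed

lemma Gamma_mult_kummerM_lower_nn:
  fixes \<alpha> \<beta> x c :: real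
  assumes "\<alpha> > 0" "\<beta> < \<alpha>" "x > 0" "c \<ge> 0"
    and lower: "\<And>s. s \<ge> 1 \<Longrightarrow> c * (s powr ((1 - 2 * \<alpha>) / 4) * exp (2 * sqrt s)) \<le> hyp0F1 \<alpha> s"
  shows "ennreal (2 * c * x powr ((1 - 2 * \<alpha>) / 4))
      * (\<integral>\<^sup>+u\<in>{1 / sqrt x<..}. ennreal (exp (kummerG \<alpha> \<beta> (- x) u)) \<partial>lborel)
    \<le> ennreal (Gamma (\<alpha> - \<beta>) * kummerM (\<alpha> - \<beta>) \<alpha> x)"
proof -
  define q where "q = (1 - 2 * \<alpha>) / 4"
  define h where "h t = t powr (\<alpha> - \<beta> - 1) * exp (- t) * ((x * t) powr q * exp (2 * sqrt (x * t)))" for t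
  have "ennreal (2 * c * x powr q) * (\<integral>\<^sup>+u\<in>{1 / sqrt x<..}. ennreal (exp (kummerG \<alpha> \<beta> (- x) u)) \<partial>lborel)
      = ennreal c * (\<integral>\<^sup>+t\<in>{1 / x<..}. ennreal (h t) \<partial>lborel)"
    using nn_integral_kummer_envelope[of x "1 / x" \<alpha> \<beta>] \<open>x > 0\<close> \<open>c \<ge> 0\<close>
    by (simp add: h_def q_def real_sqrt_divide ennreal_mult mult_ac)
  also have "\<dots> = (\<integral>\<^sup>+t\<in>{1 / x<..}. ennreal (c * h t) \<partial>lborel)"
    using \<open>c \<ge> 0\<close> by (intro set_nn_integral_cmult_real[symmetric]) (auto simp: h_def)
  also have "\<dots> \<le> (\<integral>\<^sup>+t\<in>{0<..}. ennreal (t powr (\<alpha> - \<beta> - 1) * exp (- t) * hyp0F1 \<alpha> (x * t)) \<partial>lborel)"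
  proof (intro nn_integral_mono)
    fix t :: real
    show "ennreal (c * h t) * indicator {1 / x<..} t
        \<le> ennreal (t powr (\<alpha> - \<beta> - 1) * exp (- t) * hyp0F1 \<alpha> (x * t)) * indicator {0<..} t"
    proof (cases "t > 1 / x")
      case True
      then have "t > 0" "x * t \<ge> 1"
        using \<open>x > 0\<close> by (auto simp: field_simps intro: le_less_trans[of 0 "1 / x"])
      then have "c * h t \<le> t powr (\<alpha> - \<beta> - 1) * exp (- t) * hyp0F1 \<alpha> (x * t)"
        using lower[of "x * t"] unfolding h_def q_def by (simp add: mult_left_mono mult.left_commute)
      then show ?thesis
        using True \<open>t > 0\<close> by (simp add: ennreal_leI)
    qed simp
  qed
  also have "\<dots> = ennreal (Gamma (\<alpha> - \<beta>) * kummerM (\<alpha> - \<beta>) \<alpha> x)"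
    using assms by (intro Gamma_mult_kummerM_nn_integral[symmetric]) auto
  finally show ?thesis
    unfolding q_def .
qed

lemma Gamma_mult_kummerM_upper_nn:
  fixes \<alpha> \<beta> x C :: real
  assumes "\<alpha> > 0" "\<beta> < \<alpha>" "x > 0" "C \<ge> 0"
    and upper: "\<And>s. s > 0 \<Longrightarrow> hyp0F1 \<alpha> s \<le> C * (s powr ((1 - 2 * \<alpha>) / 4) * exp (2 * sqrt s))"
  shows "ennreal (Gamma (\<alpha> - \<beta>) * kummerM (\<alpha> - \<beta>) \<alpha> x)
    \<le> ennreal (2 * C * x powr ((1 - 2 * \<alpha>) / 4))
      * (\<integral>\<^sup>+u\<in>{0<..}. ennreal (exp (kummerG \<alpha> \<beta> (- x) u)) \<partial>lborel)"
proof -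
  define q where "q = (1 - 2 * \<alpha>) / 4"
  define h where "h t = t powr (\<alpha> - \<beta> - 1) * exp (- t) * ((x * t) powr q * exp (2 * sqrt (x * t)))" for t
  have "ennreal (Gamma (\<alpha> - \<beta>) * kummerM (\<alpha> - \<beta>) \<alpha> x)
      = (\<integral>\<^sup>+t\<in>{0<..}. ennreal (t powr (\<alpha> - \<beta> - 1) * exp (- t) * hyp0F1 \<alpha> (x * t)) \<partial>lborel)"
    using assms by (intro Gamma_mult_kummerM_nn_integral) auto
  also have "\<dots> \<le> (\<integral>\<^sup>+t\<in>{0<..}. ennreal (C * h t) \<partial>lborel)"
  proof (intro nn_integral_mono)
    fix t :: real
    show "ennreal (t powr (\<alpha> - \<beta> - 1) * exp (- t) * hyp0F1 \<alpha> (x * t)) * indicator {0<..} t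
        \<le> ennreal (C * h t) * indicator {0<..} t"
    proof (cases "t > 0")
      case True
      then have "t powr (\<alpha> - \<beta> - 1) * exp (- t) * hyp0F1 \<alpha> (x * t) \<le> C * h t"
        using upper[of "x * t"] \<open>x > 0\<close> unfolding h_def q_def by (simp add: mult_left_mono mult.left_commute)
      then show ?thesis
        using True by (simp add: ennreal_leI)
    qed simp
  qed
  also have "\<dots> = ennreal C * (\<integral>\<^sup>+t\<in>{0<..}. ennreal (h t) \<partial>lborel)"
    using \<open>C \<ge> 0\<close> by (intro set_nn_integral_cmult_real) (auto simp: h_def)
  also have "\<dots> = ennreal (2 * C * x powr q) * (\<integral>\<^sup>+u\<in>{0<..}. ennreal (exp (kummerG \<alpha> \<beta> (- x) u)) \<partial>lborel)"
    using nn_integral_kummer_envelope[of x 0 \<alpha> \<beta>] \<open>x > 0\<close> \<open>C \<ge> 0\<close>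
    by (simp add: h_def q_def ennreal_mult mult_ac)
  finally show ?thesis
    unfolding q_def .
qed

lemma exp_kummerG_le_exp_two:
  fixes \<alpha> \<beta> x u :: real
  assumes "1/2 \<le> \<alpha>" "\<beta> \<le> 0" "x \<ge> 1" and u: "0 < u" "u \<le> 1 / sqrt x"
  shows "exp (kummerG \<alpha> \<beta> (- x) u) \<le> exp 2"
proof -
  have "1 / sqrt x \<le> 1"
    using \<open>x \<ge> 1\<close> by simp
  then have "u \<le> 1" "sqrt x * u \<le> 1"
    using u \<open>x \<ge> 1\<close> by (linarith, simp add: field_simps)
  have "exp (kummerG \<alpha> \<beta> (- x) u) = exp (- (u\<^sup>2) + 2 * (sqrt x * u)) * u powr (\<alpha> - 2 * \<beta> - 1/2)"
    unfolding kummerG_def using u by (simp add: exp_add powr_def mult_ac)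
  also have "\<dots> \<le> exp 2 * 1"
  proof (intro mult_mono powr_le1)
    show "exp (- (u\<^sup>2) + 2 * (sqrt x * u)) \<le> exp 2"
      using \<open>sqrt x * u \<le> 1\<close> zero_le_power2[of u] by (subst exp_le_cancel_iff) linarith
  qed (use assms \<open>u \<le> 1\<close> in auto)
  finally show ?thesis
    by simp
qed

text \<open>The tail is dominated by Gamma * kummerM, and the integrand is bounded near 0.\<close>
lemma nn_integral_exp_kummerG_finite:
  fixes \<alpha> \<beta> x :: real
  assumes \<alpha>: "1/2 \<le> \<alpha>" "\<alpha> < 3/2" and \<beta>: "\<beta> \<le> 0" and x: "x \<ge> 1"
  shows "(\<integral>\<^sup>+u\<in>{0<..}. ennreal (exp (kummerG \<alpha> \<beta> (- x) u)) \<partial>lborel) < \<infinity>"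
proof -
  obtain c where c: "c > 0" and lower: "\<And>s. s \<ge> 1 \<Longrightarrow> c * (s powr ((1 - 2 * \<alpha>) / 4) * exp (2 * sqrt s)) \<le> hyp0F1 \<alpha> s"
    using hyp0F1_bounds[OF \<alpha>] by metis
  have x_pos: "x > 0"
    using x by auto
  have "ennreal (2 * c * x powr ((1 - 2 * \<alpha>) / 4)) * (\<integral>\<^sup>+u\<in>{1 / sqrt x<..}. ennreal (exp (kummerG \<alpha> \<beta> (- x) u)) \<partial>lborel)
      \<le> ennreal (Gamma (\<alpha> - \<beta>) * kummerM (\<alpha> - \<beta>) \<alpha> x)"
    using c \<alpha> \<beta> x_pos by (intro Gamma_mult_kummerM_lower_nn lower) auto
  also have "\<dots> < \<infinity>"
    by simp
  finally have tail: "(\<integral>\<^sup>+u\<in>{1 / sqrt x<..}. ennreal (exp (kummerG \<alpha> \<beta> (- x) u)) \<partial>lborel) < \<infinity>"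
    using c x_pos by (auto simp: ennreal_mult_less_top top.not_eq_extremum)
  have "(\<integral>\<^sup>+u\<in>{0<..1 / sqrt x}. ennreal (exp (kummerG \<alpha> \<beta> (- x) u)) \<partial>lborel)
      \<le> (\<integral>\<^sup>+u. ennreal (exp 2) * indicator {0<..1 / sqrt x} u \<partial>lborel)"
    using exp_kummerG_le_exp_two[OF \<alpha>(1) \<beta> x]
    by (intro nn_integral_mono) (auto intro: ennreal_leI split: split_indicator)
  also have "\<dots> = ennreal (exp 2) * ennreal (1 / sqrt x)"
    using x_pos by (subst nn_integral_cmult_indicator) auto
  also have "\<dots> < \<infinity>"
    by (simp add: ennreal_mult_less_top)
  finally have head: "(\<integral>\<^sup>+u\<in>{0<..1 / sqrt x}. ennreal (exp (kummerG \<alpha> \<beta> (- x) u)) \<partial>lborel) < \<infinity>" .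
  have "(\<integral>\<^sup>+u\<in>{0<..}. ennreal (exp (kummerG \<alpha> \<beta> (- x) u)) \<partial>lborel)
      = (\<integral>\<^sup>+u\<in>{0<..1 / sqrt x} \<union> {1 / sqrt x<..}. ennreal (exp (kummerG \<alpha> \<beta> (- x) u)) \<partial>lborel)"
    using x_pos by (subst ivl_disj_un_one(5)) auto
  also have "\<dots> = (\<integral>\<^sup>+u\<in>{0<..1 / sqrt x}. ennreal (exp (kummerG \<alpha> \<beta> (- x) u)) \<partial>lborel)
        + (\<integral>\<^sup>+u\<in>{1 / sqrt x<..}. ennreal (exp (kummerG \<alpha> \<beta> (- x) u)) \<partial>lborel)"
    by (rule nn_integral_disjoint_pair) (auto simp: kummerG_def)
  finally show ?thesis
    using head tail by (simp add: ennreal_add_less_top)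
qed

lemma ennreal_set_lebesgue_integral_eq:
  fixes f :: "'a \<Rightarrow> real"
  assumes [measurable]: "f \<in> borel_measurable M" "S \<in> sets M"
    and nonneg: "\<And>u. u \<in> S \<Longrightarrow> f u \<ge> 0"
    and finite: "(\<integral>\<^sup>+u\<in>S. ennreal (f u) \<partial>M) < \<infinity>"
  shows "ennreal (\<integral>u\<in>S. f u \<partial>M) = (\<integral>\<^sup>+u\<in>S. ennreal (f u) \<partial>M)"
proof -
  have nonneg': "0 \<le> indicator S u * f u" for u
    using nonneg by (cases "u \<in> S") auto
  have set_nn: "(\<integral>\<^sup>+u\<in>S. ennreal (f u) \<partial>M) = (\<integral>\<^sup>+u. ennreal (indicator S u * f u) \<partial>M)"
    by (simp add: nn_integral_set_ennreal mult.commute)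
  have "integrable M (\<lambda>u. indicator S u * f u)"
    using nonneg' finite unfolding set_nn by (intro integrableI_nonneg) auto
  then show ?thesis
    unfolding set_nn set_lebesgue_integral_def using nonneg'
    by (subst nn_integral_eq_integral) auto
qed

lemma set_lebesgue_integral_nonneg:
  fixes f :: "'a \<Rightarrow> real"
  assumes "\<And>u. u \<in> S \<Longrightarrow> 0 \<le> f u"
  shows "0 \<le> (\<integral>u\<in>S. f u \<partial>M)"
  unfolding set_lebesgue_integral_def using assms by (intro integral_nonneg_AE) (auto simp: indicator_def)

lemma ennreal_LBINT_exp_kummerG:
  fixes \<alpha> \<beta> x :: real and S :: "real set"
  assumes "1/2 \<le> \<alpha>" "\<alpha> < 3/2" "\<beta> \<le> 0" "x \<ge> 1" and S: "S \<in> sets borel" "S \<subseteq> {0<..}"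
  shows "ennreal (LBINT u:S. exp (kummerG \<alpha> \<beta> (- x) u)) = (\<integral>\<^sup>+u\<in>S. ennreal (exp (kummerG \<alpha> \<beta> (- x) u)) \<partial>lborel)"
proof (rule ennreal_set_lebesgue_integral_eq)
  have "(\<integral>\<^sup>+u\<in>S. ennreal (exp (kummerG \<alpha> \<beta> (- x) u)) \<partial>lborel)
      \<le> (\<integral>\<^sup>+u\<in>{0<..}. ennreal (exp (kummerG \<alpha> \<beta> (- x) u)) \<partial>lborel)"
    using S(2) by (rule nn_set_integral_set_mono)
  also have "\<dots> < \<infinity>"
    using assms by (intro nn_integral_exp_kummerG_finite) auto
  finally show "(\<integral>\<^sup>+u\<in>S. ennreal (exp (kummerG \<alpha> \<beta> (- x) u)) \<partial>lborel) < \<infinity>" .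
qed (use S in \<open>auto simp: kummerG_def\<close>)

lemma Gamma_mult_kummerM_bounds:
  fixes \<alpha> :: real
  assumes \<alpha>: "1/2 \<le> \<alpha>" "\<alpha> < 3/2"
  obtains c C where "c > 0" "C > 0"
    "\<And>\<beta> x. \<beta> \<le> 0 \<Longrightarrow> x \<ge> 1 \<Longrightarrow>
      c * x powr ((1 - 2 * \<alpha>) / 4) * (LBINT u:{1 / sqrt x<..}. exp (kummerG \<alpha> \<beta> (- x) u))
        \<le> Gamma (\<alpha> - \<beta>) * kummerM (\<alpha> - \<beta>) \<alpha> x"
    "\<And>\<beta> x. \<beta> \<le> 0 \<Longrightarrow> x \<ge> 1 \<Longrightarrow>
      Gamma (\<alpha> - \<beta>) * kummerM (\<alpha> - \<beta>) \<alpha> x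
        \<le> C * x powr ((1 - 2 * \<alpha>) / 4) * (LBINT u:{0<..}. exp (kummerG \<alpha> \<beta> (- x) u))"
proof -
  obtain c C where c: "c > 0" "C > 0"
    and lower: "\<And>s. s \<ge> 1 \<Longrightarrow> c * (s powr ((1 - 2 * \<alpha>) / 4) * exp (2 * sqrt s)) \<le> hyp0F1 \<alpha> s"
    and upper: "\<And>s. s > 0 \<Longrightarrow> hyp0F1 \<alpha> s \<le> C * (s powr ((1 - 2 * \<alpha>) / 4) * exp (2 * sqrt s))"
    using hyp0F1_bounds[OF \<alpha>] by metis
  show ?thesis
  proof (rule that[of "2 * c" "2 * C"])
    fix \<beta> x :: real
    assume \<beta>: "\<beta> \<le> 0" and x: "x \<ge> 1"
    have \<alpha>\<beta>x: "\<alpha> > 0" "\<beta> < \<alpha>" "x > 0"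
      using \<alpha> \<beta> x by auto
    have "{1 / sqrt x<..} \<subseteq> {0<..}"
      using x by (auto intro: less_trans[of 0 "1 / sqrt x"])
    then have "ennreal (2 * c * x powr ((1 - 2 * \<alpha>) / 4) * (LBINT u:{1 / sqrt x<..}. exp (kummerG \<alpha> \<beta> (- x) u)))
        \<le> ennreal (Gamma (\<alpha> - \<beta>) * kummerM (\<alpha> - \<beta>) \<alpha> x)"
      using Gamma_mult_kummerM_lower_nn[OF \<alpha>\<beta>x _ lower] ennreal_LBINT_exp_kummerG[OF \<alpha> \<beta> x] c
      by (simp add: ennreal_mult set_lebesgue_integral_nonneg)
    moreover have "Gamma (\<alpha> - \<beta>) * kummerM (\<alpha> - \<beta>) \<alpha> x \<ge> 0"
      using \<alpha>\<beta>x by (intro mult_nonneg_nonneg kummerM_nonneg) auto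
    ultimately show "2 * c * x powr ((1 - 2 * \<alpha>) / 4) * (LBINT u:{1 / sqrt x<..}. exp (kummerG \<alpha> \<beta> (- x) u))
        \<le> Gamma (\<alpha> - \<beta>) * kummerM (\<alpha> - \<beta>) \<alpha> x"
      by (simp add: ennreal_le_iff)
    have "ennreal (Gamma (\<alpha> - \<beta>) * kummerM (\<alpha> - \<beta>) \<alpha> x)
        \<le> ennreal (2 * C * x powr ((1 - 2 * \<alpha>) / 4) * (LBINT u:{0<..}. exp (kummerG \<alpha> \<beta> (- x) u)))"
      using Gamma_mult_kummerM_upper_nn[OF \<alpha>\<beta>x _ upper] ennreal_LBINT_exp_kummerG[OF \<alpha> \<beta> x] c
      by (simp add: ennreal_mult set_lebesgue_integral_nonneg)
    then show "Gamma (\<alpha> - \<beta>) * kummerM (\<alpha> - \<beta>) \<alpha> x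
        \<le> 2 * C * x powr ((1 - 2 * \<alpha>) / 4) * (LBINT u:{0<..}. exp (kummerG \<alpha> \<beta> (- x) u))"
      using c by (simp add: ennreal_le_iff set_lebesgue_integral_nonneg)
  qed (use c in auto)
qed

theorem kummerM_two_sided_bound:
  fixes \<alpha> :: real
  assumes \<alpha>: "1/2 \<le> \<alpha>" "\<alpha> < 3/2"
  shows "\<exists>C > 0. \<forall>\<beta> y :: real. \<beta> \<le> 0 \<longrightarrow> y \<le> -1 \<longrightarrow>
    (1 / C) * (exp y * (- y) powr ((1 - 2 * \<alpha>) / 4) / Gamma (\<alpha> - \<beta>))
        * (LBINT u:{1 / sqrt (- y)<..}. exp (kummerG \<alpha> \<beta> y u))
      \<le> kummerM \<beta> \<alpha> y
    \<and> kummerM \<beta> \<alpha> y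
      \<le> C * (exp y * (- y) powr ((1 - 2 * \<alpha>) / 4) / Gamma (\<alpha> - \<beta>))
        * (LBINT u:{0<..}. exp (kummerG \<alpha> \<beta> y u))"
proof -
  obtain c C where c: "c > 0" "C > 0" and bounds:
    "\<And>\<beta> x. \<beta> \<le> 0 \<Longrightarrow> x \<ge> 1 \<Longrightarrow>
      c * x powr ((1 - 2 * \<alpha>) / 4) * (LBINT u:{1 / sqrt x<..}. exp (kummerG \<alpha> \<beta> (- x) u))
        \<le> Gamma (\<alpha> - \<beta>) * kummerM (\<alpha> - \<beta>) \<alpha> x"
    "\<And>\<beta> x. \<beta> \<le> 0 \<Longrightarrow> x \<ge> 1 \<Longrightarrow>
      Gamma (\<alpha> - \<beta>) * kummerM (\<alpha> - \<beta>) \<alpha> x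
        \<le> C * x powr ((1 - 2 * \<alpha>) / 4) * (LBINT u:{0<..}. exp (kummerG \<alpha> \<beta> (- x) u))"
    using Gamma_mult_kummerM_bounds[OF \<alpha>] by metis
  define K where "K = max (1 / c) C"
  have K: "K > 0" "1 / K \<le> c" "C \<le> K"
    unfolding K_def using c by (auto simp: field_simps max_def)
  show ?thesis
  proof (intro exI[of _ K] conjI allI impI K(1))
    fix \<beta> y :: real
    assume "\<beta> \<le> 0" "y \<le> -1"
    then have x: "- y \<ge> 1"
      by simp
    define P where "P = (- y) powr ((1 - 2 * \<alpha>) / 4)"
    define G where "G = Gamma (\<alpha> - \<beta>)"
    define M where "M = kummerM (\<alpha> - \<beta>) \<alpha> (- y)"
    define LL where "LL = (LBINT u:{1 / sqrt (- y)<..}. exp (kummerG \<alpha> \<beta> y u))"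
    define LU where "LU = (LBINT u:{0<..}. exp (kummerG \<alpha> \<beta> y u))"
    have "G > 0" "LL \<ge> 0" "LU \<ge> 0"
      unfolding G_def LL_def LU_def using \<alpha> \<open>\<beta> \<le> 0\<close> by (auto intro: set_lebesgue_integral_nonneg)
    have lower: "c * P * LL \<le> G * M" and upper: "G * M \<le> C * P * LU"
      using bounds[OF \<open>\<beta> \<le> 0\<close> x] unfolding P_def G_def M_def LL_def LU_def by simp_all
    have kummerM: "kummerM \<beta> \<alpha> y = exp y * M"
      unfolding M_def using kummerM_transformation[of \<alpha> \<beta> y] \<alpha> by simp
    have "1 / K * (exp y * P / G) * LL \<le> c * (exp y * P / G) * LL"
      using K \<open>G > 0\<close> \<open>LL \<ge> 0\<close> by (intro mult_right_mono) (auto simp: P_def)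
    also have "\<dots> \<le> kummerM \<beta> \<alpha> y"
      using lower \<open>G > 0\<close> unfolding kummerM by (simp add: field_simps)
    finally show "1 / K * (exp y * (- y) powr ((1 - 2 * \<alpha>) / 4) / Gamma (\<alpha> - \<beta>)) * LL \<le> kummerM \<beta> \<alpha> y"
      unfolding P_def G_def .
    have "kummerM \<beta> \<alpha> y \<le> C * (exp y * P / G) * LU"
      using upper \<open>G > 0\<close> unfolding kummerM by (simp add: field_simps)
    also have "\<dots> \<le> K * (exp y * P / G) * LU"
      using K \<open>G > 0\<close> \<open>LU \<ge> 0\<close> by (intro mult_right_mono) (auto simp: P_def)
    finally show "kummerM \<beta> \<alpha> y \<le> K * (exp y * (- y) powr ((1 - 2 * \<alpha>) / 4) / Gamma (\<alpha> - \<beta>)) * LU"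
      unfolding P_def G_def .
  qed
qed

theorem lemma4p3:
  fixes n :: nat
  assumes "n \<ge> 2"
  defines "\<alpha> \<equiv> 1 - 1 / real n"
  shows "\<exists>C > 0. \<forall>\<beta> y :: real. \<beta> \<le> 0 \<longrightarrow> y \<le> -1 \<longrightarrow>
    (1 / C) * (exp y * (- y) powr ((1 - 2 * \<alpha>) / 4) / Gamma (\<alpha> - \<beta>))
        * (LBINT u:{1 / sqrt (- y)<..}. exp (kummerG \<alpha> \<beta> y u))
      \<le> kummerM \<beta> \<alpha> y
    \<and> kummerM \<beta> \<alpha> y
      \<le> C * (exp y * (- y) powr ((1 - 2 * \<alpha>) / 4) / Gamma (\<alpha> - \<beta>))
        * (LBINT u:{0<..}. exp (kummerG \<alpha> \<beta> y u))"
proof (rule kummerM_two_sided_bound)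
  show "1/2 \<le> \<alpha>" "\<alpha> < 3/2"
    unfolding \<alpha>_def using assms by (auto simp: field_simps)
qed

end
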